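(* Let $\epsilon\in(0,\frac12)$ and let $G$ be a layered graph over $\Sigma_{in}$ of depth $n\ge\frac{2}{1-\epsilon}$. Let $|\Sigma_{out}|>(2|\Sigma_{in}|)^{6/\epsilon^2}$. Then a uniformly random $(G,\Sigma_{out})$-code (each edge label chosen independently and uniformly from $\Sigma_{out}$) is an $\epsilon$-sensitive layered code on $G$ with alphabet $\Sigma_{out}$ with probability at least $1-2^{-n/4\epsilon}$.
   Context: A layered graph over alphabet $\Sigma$ of depth $n$ is a directed graph whose vertices are partitioned into layers $0,\dots,n$, with exactly one vertex (the root) in layer $0$, and each vertex in layer $i<n$ has exactly $|\Sigma|$ out-edges to layer $i+1$ labeled by the distinct elements of $\Sigma$ (endpoints need not be distinct). A string $p\in\Sigma_{in}^i$ determines a unique root path ending at vertex $v(p)$ in layer $i$. A $(G,\Sigma_{out})$-code $\mathsf{C}$ assigns an element of $\Sigma_{out}$ to each edge; $\mathsf{C}(p)$ is the label string along $p$. Suffix distance: $\Delta_{sfx}(x,y)=\max_{0\le i\le m-1}\frac{\Delta(x[i+1:m],y[i+1:m])}{m-i}$ for $x,y\in\Sigma^m$, $\Delta$ Hamming distance. $L_i(\mathsf{C},w,\epsilon)=\{v(p):p\in\Sigma_{in}^i,\ \Delta_{sfx}(\mathsf{C}(p),w[1:i])<1-\epsilon\}$, $L(\mathsf{C},w,\epsilon)=\bigcup_{i=1}^nL_i(\mathsf{C},w,\epsilon)$. For $S\subseteq L(\mathsf{C},w,\epsilon)$, a prefix tree of $S$ is a union of paths $p(v)$ ($v\in S$)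 from the root to $v$, each with $\Delta_{sfx}(\mathsf{C}(p(v)),w[1:|p(v)|])<1-\epsilon$, that forms a rooted tree; $\mathcal{PT}(\mathsf{C},w,\epsilon)$ is the set of all prefix trees of all subsets of $L(\mathsf{C},w,\epsilon)$. For a subgraph $H$, $w(H)$ labels each edge of $H$ at depth $i$ with $w[i]$, $\mathsf{C}(H)$ labels by $\mathsf{C}$, and $agr(\mathsf{C}(H),w(H))$ is the number of edges of $H$ with equal labels. A $(G,\Sigma_{out})$-code $\mathsf{C}$ is an $\epsilon$-sensitive layered code if for all $w\in\Sigma_{out}^n$ and all $PT\in\mathcal{PT}(\mathsf{C},w,\epsilon)$, $agr(\mathsf{C}(PT),w(PT))\le(1+\epsilon)n$. *)

theory Defs
  imports "HOL-Probability.Probability"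
begin

text \<open>An edge is identified with
  the pair (v, a) (so parallel edges are allowed).\<close>
definition layered_graph ::
  "'v set \<Rightarrow> ('v \<Rightarrow> nat) \<Rightarrow> 'v \<Rightarrow> ('v \<Rightarrow> 'a \<Rightarrow> 'v) \<Rightarrow> nat \<Rightarrow> bool" where
  "layered_graph V lay r \<delta> n \<longleftrightarrow>
     finite V \<and> (\<forall>v\<in>V. lay v \<le> n) \<and> r \<in> V \<and> {v\<in>V. lay v = 0} = {r} \<and>
     (\<forall>v\<in>V. lay v < n \<longrightarrow> (\<forall>a. \<delta> v a \<in> V \<and> lay (\<delta> v a) = Suc (lay v)))"

definition graph_edges :: "'v set \<Rightarrow> ('v \<Rightarrow> nat) \<Rightarrow> nat \<Rightarrow> ('v \<times> 'a) set" where
  "graph_edges V lay n = {(v, a). v \<in> V \<and> lay v < n}"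

definition run :: "'v \<Rightarrow> ('v \<Rightarrow> 'a \<Rightarrow> 'v) \<Rightarrow> 'a list \<Rightarrow> 'v" where
  "run r \<delta> p = foldl \<delta> r p"

definition path_edges :: "'v \<Rightarrow> ('v \<Rightarrow> 'a \<Rightarrow> 'v) \<Rightarrow> 'a list \<Rightarrow> ('v \<times> 'a) set" where
  "path_edges r \<delta> p = {(run r \<delta> (take j p), p ! j) | j. j < length p}"

definition code_word :: "'v \<Rightarrow> ('v \<Rightarrow> 'a \<Rightarrow> 'v) \<Rightarrow> ('v \<times> 'a \<Rightarrow> 'b) \<Rightarrow> 'a list \<Rightarrow> 'b list" where
  "code_word r \<delta> C p = map (\<lambda>j. C (run r \<delta> (take j p), p ! j)) [0..<length p]"

definition hamming :: "'b list \<Rightarrow> 'b list \<Rightarrow> nat" where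
  "hamming x y = card {j. j < length x \<and> x ! j \<noteq> y ! j}"

text \<open>Suffix distance of two strings of the same length m \<ge> 1.\<close>
definition sfx_dist :: "'b list \<Rightarrow> 'b list \<Rightarrow> real" where
  "sfx_dist x y = Max ((\<lambda>i. real (hamming (drop i x) (drop i y)) / real (length x - i)) ` {0..<length x})"

definition L_layer :: "'v \<Rightarrow> ('v \<Rightarrow> 'a \<Rightarrow> 'v) \<Rightarrow> ('v \<times> 'a \<Rightarrow> 'b) \<Rightarrow> 'b list \<Rightarrow> real \<Rightarrow> nat \<Rightarrow> 'v set" where
  "L_layer r \<delta> C w \<epsilon> i = {run r \<delta> p | p. length p = i \<and> sfx_dist (code_word r \<delta> C p) (take i w) < 1 - \<epsilon>}"

definition L_set :: "'v \<Rightarrow> ('v \<Rightarrow> 'a \<Rightarrow> 'v) \<Rightarrow> ('v \<times> 'a \<Rightarrow> 'b) \<Rightarrow> 'b list \<Rightarrow> real \<Rightarrow> nat \<Rightarrow> 'v set" where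
  "L_set r \<delta> C w \<epsilon> n = (\<Union>i\<in>{1..n}. L_layer r \<delta> C w \<epsilon> i)"

text \<open>An edge set H is a rooted tree (arborescence) with root r: every edge's tail is
  reachable from the root inside H, and each vertex is the end of at most one root
  path inside H (edges of a path are determined by its label string).\<close>
definition rooted_tree :: "'v \<Rightarrow> ('v \<Rightarrow> 'a \<Rightarrow> 'v) \<Rightarrow> ('v \<times> 'a) set \<Rightarrow> bool" where
  "rooted_tree r \<delta> H \<longleftrightarrow>
     (\<forall>(u, a)\<in>H. \<exists>p. path_edges r \<delta> p \<subseteq> H \<and> run r \<delta> p = u) \<and>
     (\<forall>p q. path_edges r \<delta> p \<subseteq> H \<and> path_edges r \<delta> q \<subseteq> H \<and> run r \<delta> p = run r \<delta> q \<longrightarrow> p = q)"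

definition prefix_trees ::
  "('v \<Rightarrow> nat) \<Rightarrow> 'v \<Rightarrow> ('v \<Rightarrow> 'a \<Rightarrow> 'v) \<Rightarrow> nat \<Rightarrow> ('v \<times> 'a \<Rightarrow> 'b) \<Rightarrow> 'b list \<Rightarrow> real \<Rightarrow> ('v \<times> 'a) set set" where
  "prefix_trees lay r \<delta> n C w \<epsilon> =
     {H. \<exists>S P. S \<subseteq> L_set r \<delta> C w \<epsilon> n \<and>
          (\<forall>v\<in>S. length (P v) = lay v \<and> run r \<delta> (P v) = v \<and>
                  sfx_dist (code_word r \<delta> C (P v)) (take (length (P v)) w) < 1 - \<epsilon>) \<and>
          H = (\<Union>v\<in>S. path_edges r \<delta> (P v)) \<and> rooted_tree r \<delta> H}"

text \<open>agr(C(H), w(H)): an edge (u,a) lies at depth lay u + 1 and is labelled w[lay u + 1]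
  (0-indexed: w ! lay u).\<close>
definition agr :: "('v \<Rightarrow> nat) \<Rightarrow> ('v \<times> 'a \<Rightarrow> 'b) \<Rightarrow> 'b list \<Rightarrow> ('v \<times> 'a) set \<Rightarrow> nat" where
  "agr lay C w H = card {(u, a) \<in> H. C (u, a) = w ! lay u}"

definition eps_sensitive ::
  "('v \<Rightarrow> nat) \<Rightarrow> 'v \<Rightarrow> ('v \<Rightarrow> 'a \<Rightarrow> 'v) \<Rightarrow> nat \<Rightarrow> ('v \<times> 'a \<Rightarrow> 'b) \<Rightarrow> real \<Rightarrow> bool" where
  "eps_sensitive lay r \<delta> n C \<epsilon> \<longleftrightarrow>
     (\<forall>w. length w = n \<longrightarrow>
        (\<forall>H\<in>prefix_trees lay r \<delta> n C w \<epsilon>. real (agr lay C w H) \<le> (1 + \<epsilon>) * real n))"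

text \<open>Uniformly random (G, 'b)-code: independent uniform labels on all edges
  (uniform over the finite set of labelings of the edge set).\<close>
definition random_code :: "'v set \<Rightarrow> ('v \<Rightarrow> nat) \<Rightarrow> nat \<Rightarrow> ('v \<times> 'a \<Rightarrow> 'b::finite) pmf" where
  "random_code V lay n = pmf_of_set (PiE (graph_edges V lay n) (\<lambda>_. UNIV))"

end

theory Submission
  imports Defs
begin

text \<open>
  If a code is not \<open>\<epsilon>\<close>-sensitive, some word \<open>w\<close> and some prefix tree \<open>T\<close>, spanned by
  paths whose labels are at suffix distance \<open>< 1 - \<epsilon>\<close> from \<open>w\<close>, have a set \<open>A\<close> of more
  than \<open>(1 + \<epsilon>) n\<close> edges on which the code agrees with \<open>w\<close>.  Adding the paths one at a
  time, each contributes a final segment of new edges, on which agreement is \<open>\<epsilon>\<close>-dense;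
  hence also \<open>\<epsilon> |T| \<le> |A|\<close>.  All edges of \<open>A\<close> at the same depth carry the same symbol
  of \<open>w\<close>, and there are at most \<open>n\<close> depths, so a uniformly random code over an output
  alphabet of size \<open>q\<close> has this pattern with probability at most \<open>q^-(|A| - n)\<close>.  For
  \<open>q > (2k)^(6/\<epsilon>\<^sup>2)\<close>, with \<open>k\<close> the size of the input alphabet, this is at most
  \<open>2^-(n/(4\<epsilon>)) (8k)^-|T|\<close>.  A union bound over the \<open>2^|T|\<close> choices of \<open>A\<close> and over all
  trees \<open>T\<close> finishes the proof, because the weighted number of trees \<open>W(d) = \<Sum>T. (4k)^-|T|\<close>
  satisfies \<open>W(d + 1) \<le> (1 + W(d) / (4k))^k\<close> and hence stays below \<open>2\<close>.
\<close>

section \<open>Weighted counting of trees\<close>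

text \<open>A tree of depth at most \<open>d\<close> in the complete tree over the alphabet \<open>'a\<close>, represented
  by the label strings of its non-root vertices.\<close>
definition string_trees :: "nat \<Rightarrow> 'a list set set" where
  "string_trees d = {T. \<forall>s\<in>T. s \<noteq> [] \<and> length s \<le> d \<and> (\<forall>i\<in>{1..length s}. take i s \<in> T)}"

definition subtree :: "'a \<Rightarrow> 'a list set \<Rightarrow> 'a list set" where
  "subtree a T = {s. s \<noteq> [] \<and> a # s \<in> T}"

definition children :: "'a list set \<Rightarrow> 'a \<Rightarrow> 'a list set option" where
  "children T a = (if [a] \<in> T then Some (subtree a T) else None)"

definition branch_weight :: "real \<Rightarrow> 'a list set option \<Rightarrow> real" where
  "branch_weight z X = (case X of None \<Rightarrow> 1 | Some U \<Rightarrow> z * z ^ card U)"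

lemma empty_in_string_trees [simp]: "{} \<in> string_trees d"
  unfolding string_trees_def by simp

lemma string_trees_0 [simp]: "string_trees 0 = {{}}"
  unfolding string_trees_def by auto

lemma finite_string_tree:
  assumes "T \<in> string_trees d" shows "finite (T :: 'a::finite list set)"
proof (rule finite_subset)
  show "T \<subseteq> {s. set s \<subseteq> UNIV \<and> length s \<le> d}"
    using assms unfolding string_trees_def by auto
qed (rule finite_lists_length_le, simp)

lemma finite_string_trees: "finite (string_trees d :: 'a::finite list set set)"
proof (rule finite_subset)
  show "string_trees d \<subseteq> Pow {s :: 'a list. set s \<subseteq> UNIV \<and> length s \<le> d}"
    unfolding string_trees_def by auto
qed (use finite_lists_length_le[of "UNIV :: 'a set" d] in simp)

lemma take_mem_string_tree:
  assumes "T \<in> string_trees d" "s \<in> T" "0 < i" "i \<le> length s"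
  shows "take i s \<in> T"
  using assms unfolding string_trees_def by auto

lemma subtree_in_string_trees:
  assumes T: "T \<in> string_trees (Suc d)"
  shows "subtree a T \<in> string_trees d"
proof -
  have "take i s \<in> subtree a T" if "s \<in> subtree a T" "i \<in> {1..length s}" for s i
    using that take_mem_string_tree[OF T, of "a # s" "Suc i"] by (simp add: subtree_def)
  then show ?thesis
    using T unfolding string_trees_def subtree_def by fastforce
qed

lemma Cons_preimage_string_tree:
  assumes "T \<in> string_trees d"
  shows "{s. a # s \<in> T} = (case children T a of None \<Rightarrow> {} | Some U \<Rightarrow> insert [] U)"
  using take_mem_string_tree[OF assms, of "a # _" 1]
  by (auto simp: children_def subtree_def)

lemma inj_on_children: "inj_on children (string_trees d)"
proof (rule inj_onI)
  fix T T' :: "'a list set" assume T: "T \<in> string_trees d" and T': "T' \<in> string_trees d"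
    and eq: "children T = children T'"
  have "{s. a # s \<in> T} = {s. a # s \<in> T'}" for a
    using Cons_preimage_string_tree[OF T] Cons_preimage_string_tree[OF T'] eq by simp
  moreover have "[] \<notin> T" "[] \<notin> T'"
    using T T' unfolding string_trees_def by auto
  ultimately show "T = T'"
    by (metis (mono_tags, lifting) mem_Collect_eq neq_Nil_conv set_eqI)
qed

lemma power_card_string_tree:
  assumes T: "T \<in> string_trees (Suc d)"
  shows "z ^ card (T :: 'a::finite list set) = (\<Prod>a\<in>UNIV. branch_weight z (children T a))"
proof -
  have "T = (\<Union>a. Cons a ` {s. a # s \<in> T})"
    using T unfolding string_trees_def by (auto simp: image_iff neq_Nil_conv)
  then have "card T = card (\<Union>a. Cons a ` {s. a # s \<in> T})"
    by (rule arg_cong)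
  also have "\<dots> = (\<Sum>a\<in>UNIV. card (Cons a ` {s. a # s \<in> T}))"
    by (rule card_UN_disjoint) (use finite_string_tree[OF T] in \<open>auto intro: finite_subset\<close>)
  also have "\<dots> = (\<Sum>a\<in>UNIV. card {s. a # s \<in> T})"
    by (simp add: card_image)
  finally have "z ^ card T = (\<Prod>a\<in>UNIV. z ^ card {s. a # s \<in> T})"
    by (simp add: power_sum)
  also have "\<dots> = (\<Prod>a\<in>UNIV. branch_weight z (children T a))"
  proof (rule prod.cong)
    fix a
    show "z ^ card {s. a # s \<in> T} = branch_weight z (children T a)"
    proof (cases "children T a")
      case (Some U)
      then have "U \<in> string_trees d"
        using subtree_in_string_trees[OF T] by (auto simp: children_def split: if_splits)
      then have "finite U" "[] \<notin> U"
        using finite_string_tree unfolding string_trees_def by auto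
      then show ?thesis
        using Some by (simp add: Cons_preimage_string_tree[OF T] branch_weight_def)
    qed (simp add: Cons_preimage_string_tree[OF T] branch_weight_def)
  qed simp
  finally show ?thesis .
qed

lemma tree_weight_Suc_le:
  fixes z :: real
  assumes z: "0 \<le> z"
  shows "(\<Sum>T\<in>string_trees (Suc d). z ^ card (T :: 'a::finite list set))
         \<le> (1 + z * (\<Sum>T\<in>string_trees d. z ^ card (T :: 'a list set))) ^ CARD('a)"
proof -
  define Opt where "Opt = insert None (Some ` (string_trees d :: 'a list set set))"
  have fin_Opt: "finite Opt"
    unfolding Opt_def by (simp add: finite_string_trees)
  have "(\<Sum>T\<in>string_trees (Suc d). z ^ card (T :: 'a list set))
        = (\<Sum>T\<in>string_trees (Suc d). \<Prod>a\<in>(UNIV :: 'a set). branch_weight z (children T a))"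
    by (simp add: power_card_string_tree)
  also have "\<dots> = (\<Sum>f\<in>children ` string_trees (Suc d). \<Prod>a\<in>(UNIV :: 'a set). branch_weight z (f a))"
    by (simp add: sum.reindex inj_on_children)
  also have "\<dots> \<le> (\<Sum>f\<in>PiE (UNIV :: 'a set) (\<lambda>_. Opt). \<Prod>a\<in>(UNIV :: 'a set). branch_weight z (f a))"
  proof (rule sum_mono2)
    show "finite (PiE (UNIV :: 'a set) (\<lambda>_. Opt))"
      using fin_Opt by (simp add: finite_PiE)
    show "children ` string_trees (Suc d) \<subseteq> PiE (UNIV :: 'a set) (\<lambda>_. Opt)"
      unfolding Opt_def children_def using subtree_in_string_trees by fastforce
    show "0 \<le> (\<Prod>a\<in>(UNIV :: 'a set). branch_weight z (f a))" for f
      using z by (intro prod_nonneg) (simp add: branch_weight_def split: option.split)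
  qed
  also have "\<dots> = (\<Prod>a\<in>(UNIV :: 'a set). \<Sum>X\<in>Opt. branch_weight z X)"
    by (rule prod_sum_PiE[symmetric]) (simp_all add: fin_Opt)
  also have "(\<Sum>X\<in>Opt. branch_weight z X) = 1 + z * (\<Sum>T\<in>string_trees d. z ^ card (T :: 'a list set))"
    unfolding Opt_def
    by (simp add: finite_string_trees sum.reindex branch_weight_def sum_distrib_left)
  finally show ?thesis
    by simp
qed

lemma tree_weight_le_2:
  "(\<Sum>T\<in>string_trees d. (1 / (4 * real CARD('a))) ^ card (T :: 'a::finite list set)) \<le> 2"
proof (induction d)
  case (Suc d)
  define z where "z = 1 / (4 * real CARD('a))"
  have z: "0 \<le> z"
    by (simp add: z_def)
  have "(\<Sum>T\<in>string_trees (Suc d). z ^ card (T :: 'a list set))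
        \<le> (1 + z * (\<Sum>T\<in>string_trees d. z ^ card (T :: 'a list set))) ^ CARD('a)"
    by (rule tree_weight_Suc_le[OF z])
  also have "\<dots> \<le> (1 + z * 2) ^ CARD('a)"
    using Suc z by (intro power_mono add_left_mono mult_left_mono)
      (simp_all add: z_def sum_nonneg)
  also have "\<dots> \<le> exp (z * 2) ^ CARD('a)"
    by (intro power_mono) (use z in \<open>simp_all add: add_nonneg_nonneg\<close>)
  also have "\<dots> = exp (1 / 2)"
    by (simp add: z_def exp_of_nat_mult[symmetric])
  also have "\<dots> \<le> 2"
    by (rule exp_half_le2)
  finally show ?case
    by (simp add: z_def)
qed simp

section \<open>Prefix closures and agreement density\<close>

definition nonempty_prefixes :: "'a list \<Rightarrow> 'a list set" where
  "nonempty_prefixes p = {take (Suc j) p | j. j < length p}"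

definition prefix_closure :: "'a list set \<Rightarrow> 'a list set" where
  "prefix_closure F = (\<Union>p\<in>F. nonempty_prefixes p)"

lemma nonempty_prefixes_eq_image: "nonempty_prefixes p = (\<lambda>j. take (Suc j) p) ` {..<length p}"
  unfolding nonempty_prefixes_def by auto

lemma inj_on_take_Suc: "inj_on (\<lambda>j. take (Suc j) p) {..<length p}"
  by (rule inj_onI) (metis Suc_leI le_eq_less_or_eq lessThan_iff length_take min.absorb2 nat.inject)

lemma take_mem_prefix_closure:
  assumes "s \<in> prefix_closure F" "0 < i" "i \<le> length s"
  shows "take i s \<in> prefix_closure F"
proof -
  obtain p j where "p \<in> F" "j < length p" "s = take (Suc j) p"
    using assms(1) unfolding prefix_closure_def nonempty_prefixes_def by blast
  moreover have "take i s = take (Suc (i - 1)) p" "i - 1 < length p"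
    using assms(2,3) calculation by (auto simp: min_def split: if_splits)
  ultimately show ?thesis
    unfolding prefix_closure_def nonempty_prefixes_def by blast
qed

lemma prefix_closure_in_string_trees:
  assumes "\<forall>p\<in>F. length p \<le> d"
  shows "prefix_closure F \<in> string_trees d"
  using assms take_mem_prefix_closure[of _ F]
  unfolding string_trees_def prefix_closure_def nonempty_prefixes_def by fastforce

lemma down_closed_eq_lessThan_card:
  fixes J :: "nat set"
  assumes "finite J" "\<And>j j'. j \<in> J \<Longrightarrow> j' \<le> j \<Longrightarrow> j' \<in> J"
  shows "J = {..<card J}"
proof (cases "J = {}")
  case False
  have "J = {..Max J}"
  proof
    show "J \<subseteq> {..Max J}"
      using assms(1) by auto
    show "{..Max J} \<subseteq> J"
      using assms(2)[OF Max_in[OF assms(1) False]] by auto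
  qed
  then show ?thesis
    by (metis card_atMost lessThan_Suc_atMost)
qed simp

lemma nonempty_prefixes_diff_prefix_closed:
  assumes closed: "\<And>s i. s \<in> X \<Longrightarrow> 0 < i \<Longrightarrow> i \<le> length s \<Longrightarrow> take i s \<in> X"
  obtains m where "m \<le> length p"
    and "nonempty_prefixes p - X = (\<lambda>j. take (Suc j) p) ` {m..<length p}"
proof -
  define J where "J = {j. j < length p \<and> take (Suc j) p \<in> X}"
  have "J = {..<card J}"
  proof (rule down_closed_eq_lessThan_card)
    show "finite J"
      unfolding J_def by simp
    show "j' \<in> J" if "j \<in> J" "j' \<le> j" for j j'
      using that closed[of "take (Suc j) p" "Suc j'"] by (auto simp: J_def min_def)
  qed
  then have mem_X: "take (Suc j) p \<in> X \<longleftrightarrow> j < card J" if "j < length p" for j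
    using that unfolding J_def by blast
  have "card J \<le> length p"
    using card_mono[of "{..<length p}" J] unfolding J_def by auto
  moreover have "nonempty_prefixes p - X = (\<lambda>j. take (Suc j) p) ` {card J..<length p}"
    unfolding nonempty_prefixes_eq_image using mem_X by (auto simp: not_less)
  ultimately show ?thesis
    by (rule that)
qed

lemma nonempty_prefixes_diff_density:
  assumes closed: "\<And>s i. s \<in> X \<Longrightarrow> 0 < i \<Longrightarrow> i \<le> length s \<Longrightarrow> take i s \<in> X"
    and dense: "\<forall>i<length p.
           \<epsilon> * real (length p - i) < real (card {j. i \<le> j \<and> j < length p \<and> G (take (Suc j) p)})"
  shows "\<epsilon> * real (card (nonempty_prefixes p - X)) \<le> real (card {s \<in> nonempty_prefixes p - X. G s})"
proof -
  obtain m where m: "m \<le> length p"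
    and new: "nonempty_prefixes p - X = (\<lambda>j. take (Suc j) p) ` {m..<length p}"
    using nonempty_prefixes_diff_prefix_closed[OF closed] by blast
  have inj: "inj_on (\<lambda>j. take (Suc j) p) A" if "A \<subseteq> {m..<length p}" for A
    by (rule inj_on_subset[OF inj_on_take_Suc]) (use that in auto)
  have "{s \<in> nonempty_prefixes p - X. G s}
        = (\<lambda>j. take (Suc j) p) ` {j. m \<le> j \<and> j < length p \<and> G (take (Suc j) p)}"
    unfolding new by auto
  then have "card {s \<in> nonempty_prefixes p - X. G s}
             = card {j. m \<le> j \<and> j < length p \<and> G (take (Suc j) p)}"
    by (simp add: card_image inj subset_iff)
  moreover have "card (nonempty_prefixes p - X) = length p - m"
    unfolding new by (simp add: card_image inj)
  ultimately show ?thesis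
    using dense m by (cases "m < length p") (auto intro: less_imp_le)
qed

lemma prefix_closure_density:
  fixes F :: "'a list set" and G :: "'a list \<Rightarrow> bool" and \<epsilon> :: real
  assumes "finite F"
    and "\<forall>p\<in>F. \<forall>i<length p.
           \<epsilon> * real (length p - i) < real (card {j. i \<le> j \<and> j < length p \<and> G (take (Suc j) p)})"
  shows "\<epsilon> * real (card (prefix_closure F)) \<le> real (card {s \<in> prefix_closure F. G s})"
  using assms
proof (induction F rule: finite_induct)
  case empty
  then show ?case
    by (simp add: prefix_closure_def)
next
  case (insert p F)
  define X where "X = prefix_closure F"
  have fin_X: "finite X"
    unfolding X_def prefix_closure_def using insert(1) by (simp add: nonempty_prefixes_eq_image)
  have split: "prefix_closure (insert p F) = X \<union> (nonempty_prefixes p - X)"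
    unfolding X_def prefix_closure_def by auto
  have "card (prefix_closure (insert p F)) = card X + card (nonempty_prefixes p - X)"
    unfolding split by (rule card_Un_disjoint) (use fin_X in \<open>auto simp: nonempty_prefixes_eq_image\<close>)
  moreover have "card {s \<in> prefix_closure (insert p F). G s}
                 = card {s \<in> X. G s} + card {s \<in> nonempty_prefixes p - X. G s}"
  proof -
    have "{s \<in> prefix_closure (insert p F). G s} = {s \<in> X. G s} \<union> {s \<in> nonempty_prefixes p - X. G s}"
      unfolding split by auto
    also have "card \<dots> = card {s \<in> X. G s} + card {s \<in> nonempty_prefixes p - X. G s}"
      by (rule card_Un_disjoint) (use fin_X in \<open>auto simp: nonempty_prefixes_eq_image\<close>)
    finally show ?thesis .
  qed
  moreover have "\<epsilon> * real (card X) \<le> real (card {s \<in> X. G s})"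
    using insert unfolding X_def by simp
  moreover have "\<epsilon> * real (card (nonempty_prefixes p - X))
                 \<le> real (card {s \<in> nonempty_prefixes p - X. G s})"
    using insert(4) take_mem_prefix_closure unfolding X_def by (intro nonempty_prefixes_diff_density) auto
  ultimately show ?case
    by (simp only: of_nat_add distrib_left)
qed

section \<open>Witnesses of non-sensitivity\<close>

lemma hamming_drop:
  assumes "length x = length y"
  shows "hamming (drop i x) (drop i y) = card {j. i \<le> j \<and> j < length x \<and> x ! j \<noteq> y ! j}"
proof -
  have "drop i x ! j = x ! (i + j) \<and> drop i y ! j = y ! (i + j)" if "j < length x - i" for j
    using that assms by simp
  then have "{j. i \<le> j \<and> j < length x \<and> x ! j \<noteq> y ! j}
        = (+) i ` {j. j < length (drop i x) \<and> drop i x ! j \<noteq> drop i y ! j}"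
    using assms by (auto simp: image_iff le_iff_add)
  then show ?thesis
    unfolding hamming_def by (simp add: card_image)
qed

lemma agreement_gt_of_sfx_dist_less:
  assumes len: "length x = length y" and dist: "sfx_dist x y < 1 - \<epsilon>" and i: "i < length x"
  shows "\<epsilon> * real (length x - i) < real (card {j. i \<le> j \<and> j < length x \<and> x ! j = y ! j})"
proof -
  define D where "D = {j. i \<le> j \<and> j < length x \<and> x ! j \<noteq> y ! j}"
  define Ag where "Ag = {j. i \<le> j \<and> j < length x \<and> x ! j = y ! j}"
  have "real (card D) / real (length x - i) \<le> sfx_dist x y"
    unfolding sfx_dist_def D_def hamming_drop[OF len, symmetric] by (rule Max_ge) (use i in auto)
  then have "real (card D) \<le> sfx_dist x y * real (length x - i)"
    using i by (simp add: divide_le_eq)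
  also have "\<dots> < (1 - \<epsilon>) * real (length x - i)"
    using dist i by (intro mult_strict_right_mono) auto
  finally have "real (card D) < (1 - \<epsilon>) * real (length x - i)" .
  moreover have "real (card D) + real (card Ag) = real (length x - i)"
  proof -
    have "D \<union> Ag = {i..<length x}" "D \<inter> Ag = {}"
      unfolding D_def Ag_def by auto
    then show ?thesis
      by (metis card_Un_disjoint card_atLeastLessThan finite_Un finite_atLeastLessThan of_nat_add)
  qed
  moreover have "(1 - \<epsilon>) * real (length x - i) = real (length x - i) - \<epsilon> * real (length x - i)"
    by (simp add: algebra_simps)
  ultimately show ?thesis
    unfolding Ag_def by linarith
qed

definition last_edge :: "'v \<Rightarrow> ('v \<Rightarrow> 'a \<Rightarrow> 'v) \<Rightarrow> 'a list \<Rightarrow> 'v \<times> 'a" where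
  "last_edge r \<delta> s = (run r \<delta> (butlast s), last s)"

lemma run_snoc [simp]: "run r \<delta> (p @ [a]) = \<delta> (run r \<delta> p) a"
  by (simp add: run_def)

lemma run_in_layer:
  assumes G: "layered_graph V lay r \<delta> n" and "length p \<le> n"
  shows "run r \<delta> p \<in> V \<and> lay (run r \<delta> p) = length p"
  using assms(2)
proof (induction p rule: rev_induct)
  case Nil
  then show ?case
    using G by (auto simp: layered_graph_def run_def)
next
  case (snoc a p)
  then show ?case
    using G by (auto simp: layered_graph_def)
qed

lemma last_edge_take_Suc:
  "j < length p \<Longrightarrow> last_edge r \<delta> (take (Suc j) p) = (run r \<delta> (take j p), p ! j)"
  by (simp add: last_edge_def take_Suc_conv_app_nth)

lemma path_edges_eq_image: "path_edges r \<delta> p = last_edge r \<delta> ` nonempty_prefixes p"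
proof -
  have "last_edge r \<delta> ` nonempty_prefixes p = (\<lambda>j. (run r \<delta> (take j p), p ! j)) ` {..<length p}"
    unfolding nonempty_prefixes_eq_image image_image by (rule image_cong) (simp_all add: last_edge_take_Suc)
  then show ?thesis
    unfolding path_edges_def by auto
qed

lemma path_edges_take_subset: "path_edges r \<delta> (take j p) \<subseteq> path_edges r \<delta> p"
proof
  fix x assume "x \<in> path_edges r \<delta> (take j p)"
  then obtain i where i: "i < length (take j p)" "x = (run r \<delta> (take i (take j p)), take j p ! i)"
    unfolding path_edges_def by blast
  then have "i < length p" "x = (run r \<delta> (take i p), p ! i)"
    by (simp_all add: min_def split: if_splits)
  then show "x \<in> path_edges r \<delta> p"
    unfolding path_edges_def by blast
qed

lemma last_edge_in_graph_edges:
  assumes "layered_graph V lay r \<delta> n" "s \<noteq> []" "length s \<le> n"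
  shows "last_edge r \<delta> s \<in> graph_edges V lay n \<and> lay (fst (last_edge r \<delta> s)) = length s - 1"
  using assms run_in_layer[OF assms(1), of "butlast s"]
  by (cases s rule: rev_cases) (auto simp: last_edge_def graph_edges_def)

lemma L_set_subset:
  assumes "layered_graph V lay r \<delta> n"
  shows "L_set r \<delta> C w \<epsilon> n \<subseteq> V"
  using run_in_layer[OF assms] unfolding L_set_def L_layer_def by auto

lemma inj_on_last_edge_prefix_closure:
  assumes "rooted_tree r \<delta> (\<Union>p\<in>F. path_edges r \<delta> p)"
  shows "inj_on (last_edge r \<delta>) (prefix_closure F)"
proof (rule inj_onI)
  fix s s' assume "s \<in> prefix_closure F" "s' \<in> prefix_closure F"
    and eq: "last_edge r \<delta> s = last_edge r \<delta> s'"
  then obtain p j p' j' where p: "p \<in> F" "j < length p" "s = take (Suc j) p"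
    and p': "p' \<in> F" "j' < length p'" "s' = take (Suc j') p'"
    unfolding prefix_closure_def nonempty_prefixes_def by blast
  have "path_edges r \<delta> (take j p) \<subseteq> (\<Union>p\<in>F. path_edges r \<delta> p)"
    "path_edges r \<delta> (take j' p') \<subseteq> (\<Union>p\<in>F. path_edges r \<delta> p)"
    using order_trans[OF path_edges_take_subset UN_upper[of _ F "path_edges r \<delta>"]] p(1) p'(1)
    by simp_all
  moreover have "run r \<delta> (take j p) = run r \<delta> (take j' p')" "p ! j = p' ! j'"
    using eq p p' by (simp_all add: last_edge_take_Suc)
  ultimately have "take j p = take j' p'"
    using assms unfolding rooted_tree_def by blast
  then show "s = s'"
    using p p' \<open>p ! j = p' ! j'\<close> by (simp add: take_Suc_conv_app_nth)
qed

lemma agr_image_last_edge: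
  assumes "layered_graph V lay r \<delta> n" "T \<in> string_trees n" "inj_on (last_edge r \<delta>) T"
  shows "agr lay C w (last_edge r \<delta> ` T)
         = card {s \<in> T. C (last_edge r \<delta> s) = w ! (length s - 1)}"
proof -
  have "lay (run r \<delta> (butlast s)) = length s - 1" if "s \<in> T" for s
    using last_edge_in_graph_edges[OF assms(1)] that assms(2)
    unfolding string_trees_def last_edge_def by fastforce
  then have "{(u, a) \<in> last_edge r \<delta> ` T. C (u, a) = w ! lay u}
             = last_edge r \<delta> ` {s \<in> T. C (last_edge r \<delta> s) = w ! (length s - 1)}"
    unfolding last_edge_def by auto
  then show ?thesis
    unfolding agr_def using assms(3) by (simp add: card_image inj_on_subset)
qed

lemma agreement_along_path_gt:
  assumes "length p \<le> length w" "sfx_dist (code_word r \<delta> C p) (take (length p) w) < 1 - \<epsilon>"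
    and "i < length p"
  shows "\<epsilon> * real (length p - i) < real (card {j. i \<le> j \<and> j < length p \<and>
           C (last_edge r \<delta> (take (Suc j) p)) = w ! (length (take (Suc j) p) - 1)})"
proof -
  have "{j. i \<le> j \<and> j < length p \<and> code_word r \<delta> C p ! j = take (length p) w ! j}
        = {j. i \<le> j \<and> j < length p \<and>
           C (last_edge r \<delta> (take (Suc j) p)) = w ! (length (take (Suc j) p) - 1)}"
    by (auto simp: code_word_def last_edge_take_Suc)
  moreover have "length (code_word r \<delta> C p) = length (take (length p) w)"
    using assms(1) by (simp add: code_word_def)
  ultimately show ?thesis
    using agreement_gt_of_sfx_dist_less[OF _ assms(2), of i] assms(3) by (simp add: code_word_def)
qed

lemma prefix_closure_agreement_density:
  assumes "finite F"
    and "\<forall>p\<in>F. length p \<le> length w \<and> sfx_dist (code_word r \<delta> C p) (take (length p) w) < 1 - \<epsilon>"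
  shows "\<epsilon> * real (card (prefix_closure F))
         \<le> real (card {s \<in> prefix_closure F. C (last_edge r \<delta> s) = w ! (length s - 1)})"
proof (rule prefix_closure_density[OF assms(1)], intro ballI allI impI)
  fix p i assume "p \<in> F" "i < length p"
  then show "\<epsilon> * real (length p - i) < real (card {j. i \<le> j \<and> j < length p \<and>
               C (last_edge r \<delta> (take (Suc j) p)) = w ! (length (take (Suc j) p) - 1)})"
    using assms(2) by (intro agreement_along_path_gt) auto
qed

definition codes_constant_on_levels ::
  "'v \<Rightarrow> ('v \<Rightarrow> 'a \<Rightarrow> 'v) \<Rightarrow> 'a list set \<Rightarrow> ('v \<times> 'a \<Rightarrow> 'b) set" where
  "codes_constant_on_levels r \<delta> A =
     {C. \<forall>s\<in>A. \<forall>s'\<in>A. length s = length s' \<longrightarrow> C (last_edge r \<delta> s) = C (last_edge r \<delta> s')}"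

text \<open>The shape of a violation of sensitivity: a prefix tree \<open>T\<close> and the set \<open>A\<close> of its edges
  agreeing with the word, both as sets of label strings.  Only counting constraints are kept, so
  the pairs do not depend on the code and a union bound over them is possible.\<close>
definition witness_pairs ::
  "'v \<Rightarrow> ('v \<Rightarrow> 'a \<Rightarrow> 'v) \<Rightarrow> nat \<Rightarrow> real \<Rightarrow> ('a list set \<times> 'a list set) set" where
  "witness_pairs r \<delta> n \<epsilon> =
     {(T, A). T \<in> string_trees n \<and> A \<subseteq> T \<and> (1 + \<epsilon>) * real n < real (card A) \<and>
              \<epsilon> * real (card T) \<le> real (card A) \<and> inj_on (last_edge r \<delta>) A}"

lemma witness_of_not_eps_sensitive:
  assumes G: "layered_graph V lay r \<delta> n" and "\<not> eps_sensitive lay r \<delta> n C \<epsilon>"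
  shows "\<exists>c\<in>witness_pairs r \<delta> n \<epsilon>. C \<in> codes_constant_on_levels r \<delta> (snd c)"
proof -
  obtain w H where w: "length w = n" and H: "H \<in> prefix_trees lay r \<delta> n C w \<epsilon>"
    and big: "(1 + \<epsilon>) * real n < real (agr lay C w H)"
    using assms(2) unfolding eps_sensitive_def by force
  then obtain S P where S: "S \<subseteq> L_set r \<delta> C w \<epsilon> n"
    and P: "\<forall>v\<in>S. length (P v) = lay v \<and> run r \<delta> (P v) = v \<and>
                  sfx_dist (code_word r \<delta> C (P v)) (take (length (P v)) w) < 1 - \<epsilon>"
    and H_eq: "H = (\<Union>p\<in>P ` S. path_edges r \<delta> p)" and tree: "rooted_tree r \<delta> H"
    unfolding prefix_trees_def by auto
  define e where "e = last_edge r \<delta>"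
  define T where "T = prefix_closure (P ` S)"
  define A where "A = {s \<in> T. C (e s) = w ! (length s - 1)}"
  have S_V: "S \<subseteq> V"
    using S L_set_subset[OF G] by blast
  have len: "length p \<le> n" if "p \<in> P ` S" for p
    using that P S_V G unfolding layered_graph_def by auto
  have T_tree: "T \<in> string_trees n"
    unfolding T_def using len by (intro prefix_closure_in_string_trees) blast
  have H_T: "H = e ` T"
    unfolding H_eq T_def e_def prefix_closure_def path_edges_eq_image image_UN ..
  have inj: "inj_on e T"
    using tree unfolding H_eq T_def e_def by (rule inj_on_last_edge_prefix_closure)
  have "real (card A) > (1 + \<epsilon>) * real n"
    using big agr_image_last_edge[OF G T_tree, of C w] inj unfolding H_T A_def e_def by simp
  moreover have "\<epsilon> * real (card T) \<le> real (card A)"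
    unfolding T_def A_def e_def using S_V G len P w
    by (intro prefix_closure_agreement_density) (auto simp: layered_graph_def intro: finite_subset)
  moreover have "C \<in> codes_constant_on_levels r \<delta> A"
    unfolding codes_constant_on_levels_def A_def e_def by auto
  moreover have "A \<subseteq> T"
    unfolding A_def by blast
  ultimately show ?thesis
    using T_tree inj_on_subset[OF inj] unfolding witness_pairs_def e_def[symmetric]
    by (intro bexI[of _ "(T, A)"]) auto
qed

section \<open>Probability of a witness\<close>

lemma extensional_eq_if_determined:
  assumes "C \<in> extensional E" "C' \<in> extensional E" "B \<subseteq> E" "h ` B \<subseteq> E - B"
    and "\<forall>x\<in>B. C x = C (h x)" "\<forall>x\<in>B. C' x = C' (h x)" "\<forall>x\<in>E - B. C x = C' x"
  shows "C = C'"
proof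
  fix x
  consider "x \<in> E - B" | "x \<in> B" | "x \<notin> E"
    using assms(3) by blast
  then show "C x = C' x"
  proof cases
    case 2
    then have "h x \<in> E - B"
      using assms(4) by blast
    then show ?thesis
      using 2 assms(5-7) by metis
  qed (use assms(1,2,7) extensional_arb in metis)+
qed

lemma card_PiE_determined_le:
  fixes E B :: "'e set" and h :: "'e \<Rightarrow> 'e"
  assumes E: "finite E" and B: "B \<subseteq> E" and h: "h ` B \<subseteq> E - B"
  shows "card {C \<in> PiE E (\<lambda>_. UNIV :: 'b::finite set). \<forall>x\<in>B. C x = C (h x)}
         \<le> CARD('b) ^ (card E - card B)"
proof -
  let ?X = "{C \<in> PiE E (\<lambda>_. UNIV :: 'b set). \<forall>x\<in>B. C x = C (h x)}"
  have "inj_on (\<lambda>C. restrict C (E - B)) ?X"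
  proof (rule inj_onI)
    fix C C' assume C: "C \<in> ?X" and C': "C' \<in> ?X"
      and eq: "restrict C (E - B) = restrict C' (E - B)"
    have "C x = C' x" if "x \<in> E - B" for x
      using fun_cong[OF eq, of x] that by simp
    then show "C = C'"
      using B h C C' by (intro extensional_eq_if_determined[of C E C' B h]) (auto simp: PiE_iff)
  qed
  then have "card ?X \<le> card (PiE (E - B) (\<lambda>_. UNIV :: 'b set))"
    by (rule card_inj_on_le) (simp_all add: E finite_PiE image_subset_iff)
  also have "\<dots> = CARD('b) ^ card (E - B)"
    using E by (simp add: card_PiE)
  also have "card (E - B) = card E - card B"
    using E B by (meson card_Diff_subset finite_subset)
  finally show ?thesis .
qed

text \<open>Fixing a representative in each class of \<open>g\<close>, every other element of \<open>B\<close> carries a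
  label forced by its representative.\<close>
lemma card_PiE_constant_on_fibres_le:
  fixes E B :: "'e set" and g :: "'e \<Rightarrow> 'k"
  assumes E: "finite E" and B: "B \<subseteq> E"
  shows "card {C \<in> PiE E (\<lambda>_. UNIV :: 'b::finite set). \<forall>x\<in>B. \<forall>y\<in>B. g x = g y \<longrightarrow> C x = C y}
         \<le> CARD('b) ^ (card E - (card B - card (g ` B)))"
proof -
  define rep where "rep k = (SOME x. x \<in> B \<and> g x = k)" for k
  define B' where "B' = B - rep ` g ` B"
  have rep: "rep (g x) \<in> B \<and> g (rep (g x)) = g x" if "x \<in> B" for x
    unfolding rep_def by (rule someI[of _ x]) (simp add: that)
  have fin_B: "finite B"
    using B E by (rule finite_subset)
  have "card B' = card B - card (rep ` g ` B)"
    unfolding B'_def using rep fin_B by (intro card_Diff_subset) auto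
  moreover have "card (rep ` g ` B) \<le> card (g ` B)"
    by (rule card_image_le) (simp add: fin_B)
  ultimately have card_B': "card B - card (g ` B) \<le> card B'"
    by linarith
  have "{C \<in> PiE E (\<lambda>_. UNIV :: 'b set). \<forall>x\<in>B. \<forall>y\<in>B. g x = g y \<longrightarrow> C x = C y}
        \<subseteq> {C \<in> PiE E (\<lambda>_. UNIV). \<forall>x\<in>B'. C x = C (rep (g x))}"
  proof (intro subsetI CollectI conjI ballI; elim CollectE conjE)
    fix C x assume "x \<in> B'" and C: "\<forall>x\<in>B. \<forall>y\<in>B. g x = g y \<longrightarrow> C x = C y"
    then have "x \<in> B"
      unfolding B'_def by blast
    moreover from this have "rep (g x) \<in> B" "g x = g (rep (g x))"
      using rep by simp_all
    ultimately show "C x = C (rep (g x))"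
      using C by blast
  qed
  then have "card {C \<in> PiE E (\<lambda>_. UNIV :: 'b set). \<forall>x\<in>B. \<forall>y\<in>B. g x = g y \<longrightarrow> C x = C y}
             \<le> card {C \<in> PiE E (\<lambda>_. UNIV :: 'b set). \<forall>x\<in>B'. C x = C (rep (g x))}"
    by (rule card_mono[rotated]) (simp add: E finite_PiE)
  also have "\<dots> \<le> CARD('b) ^ (card E - card B')"
    using B rep by (intro card_PiE_determined_le[OF E]) (auto simp: B'_def)
  also have "\<dots> \<le> CARD('b) ^ (card E - (card B - card (g ` B)))"
    using card_B' by (intro power_increasing) auto
  finally show ?thesis .
qed

lemma prob_constant_on_fibres_le:
  fixes E B :: "'e set" and g :: "'e \<Rightarrow> 'k"
  assumes E: "finite E" and B: "B \<subseteq> E"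
  shows "measure_pmf.prob (pmf_of_set (PiE E (\<lambda>_. UNIV :: 'b::finite set)))
           {C. \<forall>x\<in>B. \<forall>y\<in>B. g x = g y \<longrightarrow> C x = C y}
         \<le> real CARD('b) powr - (real (card B) - real (card (g ` B)))"
proof -
  define q where "q = real CARD('b)"
  define m where "m = card B - card (g ` B)"
  have "card (g ` B) \<le> card B"
    using finite_subset[OF B E] by (rule card_image_le)
  then have m: "real m = real (card B) - real (card (g ` B))"
    unfolding m_def by simp
  have "m \<le> card E"
    unfolding m_def using card_mono[OF E B] by linarith
  have "measure_pmf.prob (pmf_of_set (PiE E (\<lambda>_. UNIV :: 'b set)))
          {C. \<forall>x\<in>B. \<forall>y\<in>B. g x = g y \<longrightarrow> C x = C y}
        = real (card {C \<in> PiE E (\<lambda>_. UNIV :: 'b set). \<forall>x\<in>B. \<forall>y\<in>B. g x = g y \<longrightarrow> C x = C y})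
          / q ^ card E"
    using E by (subst measure_pmf_of_set)
      (auto simp: PiE_eq_empty_iff finite_PiE card_PiE q_def Int_def)
  also have "\<dots> \<le> q ^ (card E - m) / q ^ card E"
    using card_PiE_constant_on_fibres_le[OF E B, where 'b = 'b, of g]
    unfolding m_def q_def by (intro divide_right_mono) (simp_all flip: of_nat_power)
  also have "\<dots> = q powr - real m"
    using \<open>m \<le> card E\<close> by (simp add: q_def power_diff powr_minus powr_realpow divide_inverse)
  finally show ?thesis
    unfolding m q_def .
qed

lemma finite_graph_edges:
  assumes "layered_graph V lay r \<delta> n"
  shows "finite (graph_edges V lay n :: ('v \<times> 'a::finite) set)"
proof (rule finite_subset)
  show "graph_edges V lay n \<subseteq> V \<times> (UNIV :: 'a set)"
    unfolding graph_edges_def by auto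
  show "finite (V \<times> (UNIV :: 'a set))"
    using assms unfolding layered_graph_def by simp
qed

lemma prob_codes_constant_on_levels_le:
  assumes G: "layered_graph V lay r \<delta> n" and W: "(T, A) \<in> witness_pairs r \<delta> n \<epsilon>"
  shows "measure_pmf.prob (random_code V lay n :: ('v \<times> 'a::finite \<Rightarrow> 'b::finite) pmf)
           (codes_constant_on_levels r \<delta> A)
         \<le> real CARD('b) powr - (real (card A) - real n)"
proof -
  define e where "e = last_edge r \<delta>"
  define g where "g x = lay (fst x)" for x :: "'v \<times> 'a"
  have A: "0 < length s \<and> length s \<le> n" if "s \<in> A" for s
    using W that unfolding witness_pairs_def string_trees_def by blast
  have edge: "e s \<in> graph_edges V lay n" "g (e s) = length s - 1" if "s \<in> A" for s
    using last_edge_in_graph_edges[OF G] A[OF that] unfolding e_def g_def by auto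
  have levels_eq: "codes_constant_on_levels r \<delta> A = {C. \<forall>x\<in>e ` A. \<forall>y\<in>e ` A. g x = g y \<longrightarrow> C x = C y}"
  proof -
    have "length s = length s' \<longleftrightarrow> g (e s) = g (e s')" if "s \<in> A" "s' \<in> A" for s s'
      using A[OF that(1)] A[OF that(2)] edge(2)[OF that(1)] edge(2)[OF that(2)] by linarith
    then show ?thesis
      unfolding codes_constant_on_levels_def e_def by blast
  qed
  have "measure_pmf.prob (random_code V lay n :: ('v \<times> 'a \<Rightarrow> 'b) pmf)
          (codes_constant_on_levels r \<delta> A)
        \<le> real CARD('b) powr - (real (card (e ` A)) - real (card (g ` e ` A)))"
    unfolding levels_eq random_code_def using edge(1)
    by (intro prob_constant_on_fibres_le finite_graph_edges[OF G] image_subsetI)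
  also have "\<dots> \<le> real CARD('b) powr - (real (card A) - real n)"
  proof (intro powr_mono)
    have "g (e s) < n" if "s \<in> A" for s
      using A[OF that] edge(2)[OF that] by linarith
    then have "card (g ` e ` A) \<le> n"
      using card_mono[of "{..<n}" "g ` e ` A"] by fastforce
    moreover have "card (e ` A) = card A"
      using W unfolding witness_pairs_def e_def by (auto intro: card_image)
    ultimately show "- (real (card (e ` A)) - real (card (g ` e ` A))) \<le> - (real (card A) - real n)"
      by simp
  qed simp
  finally show ?thesis .
qed

lemma witness_excess_ge:
  fixes \<epsilon> :: real and n a t :: nat
  assumes "0 < \<epsilon>" "\<epsilon> \<le> 1/2" "(1 + \<epsilon>) * real n < real a" "\<epsilon> * real t \<le> real a"
  shows "\<epsilon> * real n / 4 + \<epsilon>\<^sup>2 * real t / 2 \<le> real a - real n"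
proof -
  define D where "D = real a - real n"
  have "\<epsilon> * real n \<le> D"
    using assms(3) unfolding D_def by (simp add: algebra_simps)
  moreover have "0 \<le> \<epsilon> * real n"
    using assms(1) by simp
  ultimately have "0 \<le> D"
    by linarith
  have "\<epsilon>\<^sup>2 * real t \<le> \<epsilon> * real a"
    using mult_left_mono[OF assms(4), of \<epsilon>] assms(1) by (simp add: power2_eq_square mult.assoc)
  also have "\<epsilon> * real a \<le> D * (1 + \<epsilon>)"
    using assms(3) unfolding D_def by (simp add: algebra_simps)
  also have "\<dots> \<le> D * (3 / 2)"
    using \<open>0 \<le> D\<close> assms(2) by (intro mult_left_mono) auto
  finally have "\<epsilon>\<^sup>2 * real t \<le> D * (3 / 2)" .
  with \<open>\<epsilon> * real n \<le> D\<close> have "\<epsilon> * real n / 4 + \<epsilon>\<^sup>2 * real t / 2 \<le> D"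
    by linarith
  then show ?thesis
    unfolding D_def .
qed

lemma powr_neg_excess_le:
  fixes q k \<epsilon> D :: real and n t :: nat
  assumes k: "1 \<le> k" and \<epsilon>: "0 < \<epsilon>" and q: "(2 * k) powr (6 / \<epsilon>\<^sup>2) < q"
    and D: "\<epsilon> * real n / 4 + \<epsilon>\<^sup>2 * real t / 2 \<le> D"
  shows "q powr - D \<le> 2 powr - (real n / (4 * \<epsilon>)) * (1 / (8 * k)) ^ t"
proof -
  have "0 \<le> \<epsilon> * real n / 4 + \<epsilon>\<^sup>2 * real t / 2"
    using \<epsilon> by simp
  then have "0 \<le> D"
    using D by linarith
  have "3 * real n / (2 * \<epsilon>) + 3 * real t \<le> 6 / \<epsilon>\<^sup>2 * D"
  proof -
    have "6 / \<epsilon>\<^sup>2 * (\<epsilon> * real n / 4 + \<epsilon>\<^sup>2 * real t / 2) = 3 * real n / (2 * \<epsilon>) + 3 * real t"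
      using \<epsilon> by (simp add: field_simps power2_eq_square)
    then show ?thesis
      using mult_left_mono[OF D, of "6 / \<epsilon>\<^sup>2"] by simp
  qed
  have "q powr - D \<le> ((2 * k) powr (6 / \<epsilon>\<^sup>2)) powr - D"
    using q k \<open>0 \<le> D\<close> by (intro powr_mono2') auto
  also have "\<dots> = (2 * k) powr - (6 / \<epsilon>\<^sup>2 * D)"
    by (simp add: powr_powr)
  also have "\<dots> \<le> (2 * k) powr - (3 * real n / (2 * \<epsilon>) + 3 * real t)"
    using \<open>3 * real n / (2 * \<epsilon>) + 3 * real t \<le> 6 / \<epsilon>\<^sup>2 * D\<close> k by (intro powr_mono) auto
  also have "\<dots> = (2 * k) powr - (3 * real n / (2 * \<epsilon>)) * (1 / (2 * k) ^ 3) ^ t"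
  proof -
    have "(2 * k) powr (3 * real t) = ((2 * k) ^ 3) ^ t"
      using k by (simp add: powr_powr [symmetric] powr_numeral powr_realpow)
    then show ?thesis
      by (simp add: powr_diff power_one_over)
  qed
  also have "\<dots> \<le> 2 powr - (real n / (4 * \<epsilon>)) * (1 / (8 * k)) ^ t"
  proof (rule mult_mono)
    have "(2 * k) powr - (3 * real n / (2 * \<epsilon>)) \<le> 2 powr - (3 * real n / (2 * \<epsilon>))"
      using k \<epsilon> by (intro powr_mono2') auto
    also have "\<dots> \<le> 2 powr - (real n / (4 * \<epsilon>))"
      using \<epsilon> by (intro powr_mono) (auto simp: field_simps)
    finally show "(2 * k) powr - (3 * real n / (2 * \<epsilon>)) \<le> 2 powr - (real n / (4 * \<epsilon>))" .
    have "1 \<le> k * k"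
      using k mult_mono[of 1 k 1 k] by simp
    then have "8 * k \<le> (2 * k) ^ 3"
      using mult_left_mono[of 1 "k * k" "8 * k"] k by (simp add: power3_eq_cube algebra_simps)
    then show "(1 / (2 * k) ^ 3) ^ t \<le> (1 / (8 * k)) ^ t"
      using k by (intro power_mono frac_le) auto
  qed (use k in auto)
  finally show ?thesis .
qed

section \<open>The union bound\<close>

lemma witness_pairs_subset:
  assumes "0 \<le> \<epsilon>"
  shows "witness_pairs r \<delta> n \<epsilon> \<subseteq> Sigma (string_trees n - {{}}) Pow"
proof
  fix c assume "c \<in> witness_pairs r \<delta> n \<epsilon>"
  then obtain T A where c: "c = (T, A)" "T \<in> string_trees n" "A \<subseteq> T"
    and "(1 + \<epsilon>) * real n < real (card A)"
    unfolding witness_pairs_def by blast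
  moreover have "0 \<le> (1 + \<epsilon>) * real n"
    using assms by simp
  ultimately have "A \<noteq> {}"
    by auto
  with c show "c \<in> Sigma (string_trees n - {{}}) Pow"
    by auto
qed

lemma finite_Sigma_string_trees_Pow:
  "finite (Sigma (string_trees n :: 'a::finite list set set) Pow)"
  by (intro finite_SigmaI finite_string_trees) (auto dest: finite_string_tree)

lemma finite_witness_pairs: "finite (witness_pairs r \<delta> n \<epsilon> :: ('a::finite list set \<times> _) set)"
  by (rule finite_subset[OF _ finite_Sigma_string_trees_Pow]) (auto simp: witness_pairs_def)

lemma sum_witness_pairs_le_1:
  assumes "0 \<le> \<epsilon>"
  shows "(\<Sum>c\<in>witness_pairs r \<delta> n \<epsilon>. (1 / (8 * real CARD('a))) ^ card (fst c :: 'a::finite list set))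
         \<le> 1"
proof -
  define z where "z = 1 / (4 * real CARD('a))"
  have fin: "finite (Sigma (string_trees n - {{}} :: 'a list set set) Pow)"
    by (rule finite_subset[OF _ finite_Sigma_string_trees_Pow]) auto
  have "(\<Sum>c\<in>witness_pairs r \<delta> n \<epsilon>. (1 / (8 * real CARD('a))) ^ card (fst c :: 'a list set))
        \<le> (\<Sum>(T, A)\<in>Sigma (string_trees n - {{}}) Pow. (1 / (8 * real CARD('a))) ^ card (T :: 'a list set))"
    unfolding case_prod_unfold by (rule sum_mono2[OF fin witness_pairs_subset[OF assms]]) auto
  also have "\<dots> = (\<Sum>T\<in>string_trees n - {{}}. \<Sum>A\<in>Pow T. (1 / (8 * real CARD('a))) ^ card (T :: 'a list set))"
    by (rule sum.Sigma[symmetric]) (auto simp: finite_string_trees dest: finite_string_tree)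
  also have "\<dots> = (\<Sum>T\<in>string_trees n - {{}}. z ^ card (T :: 'a list set))"
  proof (rule sum.cong)
    fix T :: "'a list set" assume "T \<in> string_trees n - {{}}"
    then have "finite T"
      by (auto dest: finite_string_tree)
    then show "(\<Sum>A\<in>Pow T. (1 / (8 * real CARD('a))) ^ card T) = z ^ card T"
      by (simp add: card_Pow z_def flip: power_mult_distrib)
  qed simp
  also have "\<dots> = (\<Sum>T\<in>string_trees n. z ^ card (T :: 'a list set)) - 1"
    by (simp add: sum_diff1 finite_string_trees)
  also have "\<dots> \<le> 1"
    using tree_weight_le_2[of n, where 'a = 'a] unfolding z_def by simp
  finally show ?thesis .
qed

lemma prob_witness_le:
  assumes "layered_graph V lay r \<delta> n" "0 < \<epsilon>" "\<epsilon> < 1/2"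
    and "(2 * real CARD('a)) powr (6 / \<epsilon>\<^sup>2) < real CARD('b)"
    and c: "c \<in> witness_pairs r \<delta> n \<epsilon>"
  shows "measure_pmf.prob (random_code V lay n :: ('v \<times> 'a::finite \<Rightarrow> 'b::finite) pmf)
           (codes_constant_on_levels r \<delta> (snd c))
         \<le> 2 powr - (real n / (4 * \<epsilon>)) * (1 / (8 * real CARD('a))) ^ card (fst c)"
proof -
  obtain T A where TA: "c = (T, A)" "(T, A) \<in> witness_pairs r \<delta> n \<epsilon>"
    using c by (cases c) auto
  have "measure_pmf.prob (random_code V lay n :: ('v \<times> 'a \<Rightarrow> 'b) pmf) (codes_constant_on_levels r \<delta> A)
        \<le> real CARD('b) powr - (real (card A) - real n)"
    by (rule prob_codes_constant_on_levels_le[OF assms(1) TA(2)])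
  also have "\<dots> \<le> 2 powr - (real n / (4 * \<epsilon>)) * (1 / (8 * real CARD('a))) ^ card T"
  proof (intro powr_neg_excess_le)
    show "\<epsilon> * real n / 4 + \<epsilon>\<^sup>2 * real (card T) / 2 \<le> real (card A) - real n"
      using TA(2) assms(2,3) unfolding witness_pairs_def by (intro witness_excess_ge) auto
  qed (use assms(2,4) in auto)
  finally show ?thesis
    unfolding TA(1) by simp
qed

theorem theorem5p7:
  fixes V :: "'v set" and lay :: "'v \<Rightarrow> nat" and r :: 'v
    and \<delta> :: "'v \<Rightarrow> 'a::finite \<Rightarrow> 'v" and n :: nat and \<epsilon> :: real
  assumes "layered_graph V lay r \<delta> n"
    and "0 < \<epsilon>" and "\<epsilon> < 1/2"
    and "real n \<ge> 2 / (1 - \<epsilon>)"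
    and "real CARD('b::finite) > (2 * real CARD('a)) powr (6 / \<epsilon>^2)"
  shows "measure_pmf.prob (random_code V lay n :: ('v \<times> 'a \<Rightarrow> 'b) pmf)
            {C. eps_sensitive lay r \<delta> n C \<epsilon>} \<ge> 1 - 2 powr (- (real n / (4 * \<epsilon>)))"
proof -
  let ?M = "random_code V lay n :: ('v \<times> 'a \<Rightarrow> 'b) pmf"
  let ?W = "witness_pairs r \<delta> n \<epsilon>"
  let ?bound = "2 powr - (real n / (4 * \<epsilon>))"
  have "UNIV - {C. eps_sensitive lay r \<delta> n C \<epsilon>} \<subseteq> (\<Union>c\<in>?W. codes_constant_on_levels r \<delta> (snd c))"
    using witness_of_not_eps_sensitive[OF assms(1)] by blast
  then have "measure_pmf.prob ?M (UNIV - {C. eps_sensitive lay r \<delta> n C \<epsilon>})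
             \<le> measure_pmf.prob ?M (\<Union>c\<in>?W. codes_constant_on_levels r \<delta> (snd c))"
    by (rule measure_pmf.finite_measure_mono) simp
  also have "\<dots> \<le> (\<Sum>c\<in>?W. measure_pmf.prob ?M (codes_constant_on_levels r \<delta> (snd c)))"
    by (rule measure_pmf.finite_measure_subadditive_finite) (auto simp: finite_witness_pairs)
  also have "\<dots> \<le> (\<Sum>c\<in>?W. ?bound * (1 / (8 * real CARD('a))) ^ card (fst c))"
    using prob_witness_le[OF assms(1-3,5)] by (intro sum_mono) simp
  also have "\<dots> \<le> ?bound"
    using sum_witness_pairs_le_1[of \<epsilon> r \<delta> n] assms(2)
    by (simp add: sum_distrib_left[symmetric] mult_left_le)
  finally show ?thesis
    using measure_pmf.prob_compl[of "{C. eps_sensitive lay r \<delta> n C \<epsilon>}" ?M] by simp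
qed

end
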